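(* Let $n \in \mathbb{N}$, $\Xi = [0,1]^N$, let $\Gamma$ be the exponential-minimum decoder and $d$ the cost defined in the context. Let $\xi,\xi'$ be i.i.d. uniform on $\Xi^n$ and let $Y = \mathtt{generate}(\xi;n,p,\Gamma)$. Then almost surely, for all $i\in[n]$, $$\mathbb{E}[d(Y_i,\xi_i') - d(Y_i,\xi_i) \mid Y] = 1 - p(Y_i \mid Y_{:i-1}).$$
   Context: Vocabulary $[N]$. A language model $p$ gives next-token distributions $p(\cdot\mid x)$; $y_{:i-1}=(y_1,\dots,y_{i-1})$. Decoder: $\Gamma(\xi,\mu) := \operatorname{argmin}_{i\in[N]} -\log(\xi_i)/\mu(i)$ for $\xi\in[0,1]^N$ (with $-\log(\xi_i)/0 = +\infty$). $\mathtt{generate}(\xi;n,p,\Gamma)$ for $\xi=(\xi_1,\dots,\xi_n)\in\Xi^n$ outputs $y\in[N]^n$ with $y_i = \Gamma(\xi_i,p(\cdot\mid y_{:i-1}))$. For a string $y$ and key sequence $\xi$ of the same length, $d(y,\xi) := -\sum_{i=1}^{|y|}\log \xi_{i,y_i}$, where $\xi_{i,y}$ is the $y$-th coordinate of $\xi_i$; for a single token $d(y,\xi_i) = -\log\xi_{i,y}$. *)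

theory Defs
  imports "HOL-Probability.Probability"
begin

text \<open>Vocabulary [N] = {1..N}. A key xi_i in [0,1]^N is a function nat => real
  (only coordinates 1..N matter). A language model is p :: nat list => nat => real,
  p x k = p(k | x). Positions are 0-based: position i < n uses key xi i and prefix
  take i y.\<close>

definition expmin_cost :: "(nat \<Rightarrow> real) \<Rightarrow> (nat \<Rightarrow> real) \<Rightarrow> nat \<Rightarrow> ereal" where
  "expmin_cost xi mu k = (if mu k = 0 then \<infinity> else ereal (- ln (xi k) / mu k))"

definition Gamma :: "nat \<Rightarrow> (nat \<Rightarrow> real) \<Rightarrow> (nat \<Rightarrow> real) \<Rightarrow> nat" where
  "Gamma N xi mu = arg_min_on (expmin_cost xi mu) {1..N}"

fun gen :: "nat \<Rightarrow> (nat list \<Rightarrow> nat \<Rightarrow> real) \<Rightarrow> (nat \<Rightarrow> nat \<Rightarrow> real) \<Rightarrow> nat \<Rightarrow> nat list" where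
  "gen N p xi 0 = []"
| "gen N p xi (Suc i) = gen N p xi i @ [Gamma N (xi i) (p (gen N p xi i))]"

definition generate :: "nat \<Rightarrow> (nat \<Rightarrow> nat \<Rightarrow> real) \<Rightarrow> nat \<Rightarrow> (nat list \<Rightarrow> nat \<Rightarrow> real) \<Rightarrow> nat list" where
  "generate N xi n p = gen N p xi n"

definition dtok :: "nat \<Rightarrow> (nat \<Rightarrow> real) \<Rightarrow> real" where
  "dtok y xi = - ln (xi y)"

definition key_index :: "nat \<Rightarrow> nat \<Rightarrow> (nat \<times> nat) set" where
  "key_index n N = {0..<n} \<times> {1..N}"

definition keys_uniform :: "nat \<Rightarrow> nat \<Rightarrow> (nat \<times> nat \<Rightarrow> real) measure" where
  "keys_uniform n N = PiM (key_index n N) (\<lambda>_. uniform_measure lborel {0..1::real})"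

definition as_keys :: "(nat \<times> nat \<Rightarrow> real) \<Rightarrow> nat \<Rightarrow> nat \<Rightarrow> real" where
  "as_keys f i k = f (i, k)"

definition two_keys :: "nat \<Rightarrow> nat \<Rightarrow> ((nat \<times> nat \<Rightarrow> real) \<times> (nat \<times> nat \<Rightarrow> real)) measure" where
  "two_keys n N = keys_uniform n N \<Otimes>\<^sub>M keys_uniform n N"

end

theory Submission
  imports Defs "HOL-Real_Asymp.Real_Asymp"
begin

(* With uniform keys the exponential-minimum decoder samples from mu.  For mu(c) > 0 the event
   Gamma(xi, mu) = c is, up to null ties, the event that xi_j < xi_c^(mu(j)/mu(c)) for all j \<noteq> c.
   Integrating out these coordinates leaves the weight u^((1 - mu(c))/mu(c)) at xi_c = u, so
   P(Gamma = c) = mu(c) and E[-log xi_c; Gamma = c] = mu(c)^2.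
   The keys of different positions are independent, hence an output y of length n has probability
   q(y) = prod_j p(y_j | y_:j), with E[-log xi_(i,y_i); Y = y] = q(y) p(y_i | y_:i), while the
   independent key xi' gives E[-log xi'_(i,y_i); Y = y] = q(y).  As Y takes finitely many values,
   on each of its level sets the conditional expectation is the ratio of these integrals,
   1 - p(Y_i | Y_:i). *)

section \<open>The uniform distribution on the unit interval\<close>

abbreviation uniform01 :: "real measure" where
  "uniform01 \<equiv> uniform_measure lborel {0..1}"

lemma prob_space_uniform01: "prob_space uniform01"
  by (rule prob_space_uniform_measure) auto

lemma AE_uniform01_between: "AE u in uniform01. 0 < u \<and> u < 1"
proof -
  have "AE u in lborel. u \<notin> {0, 1}"
    by (intro AE_I'[where N="{0, 1}"]) (auto intro: finite_imp_null_set_lborel)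
  then show ?thesis
    by (intro AE_uniform_measureI) (auto elim!: eventually_mono)
qed

lemma emeasure_uniform01_less:
  assumes "0 \<le> t" "t \<le> 1"
  shows "emeasure uniform01 {v. v < t} = t"
proof -
  have "{0..1} \<inter> {v. v < t} = {0..<t}"
    using assms by auto
  then show ?thesis
    using assms by (simp add: divide_ennreal_def)
qed

lemma emeasure_uniform01_le:
  assumes "0 \<le> t" "t \<le> 1"
  shows "emeasure uniform01 {v. v \<le> t} = t"
proof -
  have "{0..1} \<inter> {v. v \<le> t} = {0..t}"
    using assms by auto
  then show ?thesis
    using assms by (simp add: divide_ennreal_def)
qed

lemma nn_integral_uniform01_has_integral:
  assumes "f \<in> borel_measurable borel" "\<And>u. u \<in> {0..1} \<Longrightarrow> 0 \<le> f u"
    and "(f has_integral I) {0..1}"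
  shows "(\<integral>\<^sup>+u. f u \<partial>uniform01) = I"
proof -
  have "(\<integral>\<^sup>+u. f u \<partial>uniform01)
      = (\<integral>\<^sup>+u. ennreal (f u) * indicator {0..1} u \<partial>lborel) / emeasure lborel {0..1::real}"
    using assms(1) by (subst nn_integral_uniform_measure) auto
  also have "\<dots> = I"
    using nn_integral_has_integral_lebesgue'[OF assms(2,3)] by (simp add: divide_ennreal_def)
  finally show ?thesis .
qed

lemma tendsto_powr_at_right_0:
  fixes r :: real
  assumes r: "r > 0"
  shows "((\<lambda>u. u powr r) \<longlongrightarrow> 0) (at_right 0)"
    and "((\<lambda>u. u powr r * ln u) \<longlongrightarrow> 0) (at_right 0)"
proof -
  show powr: "((\<lambda>u. u powr r) \<longlongrightarrow> 0) (at_right 0)"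
    using r eventually_at_right_less[of "0::real"]
    by (intro tendsto_zero_powrI tendsto_ident_at tendsto_const) (auto elim: eventually_mono)
  have "filterlim (\<lambda>u. u powr r) (at_right 0) (at_right 0)"
    unfolding filterlim_at using powr eventually_at_right_less[of "0::real"]
    by (auto elim: eventually_mono)
  moreover have "((\<lambda>v::real. v * ln v) \<longlongrightarrow> 0) (at_right 0)"
    by real_asymp
  ultimately have "((\<lambda>u. u powr r * ln (u powr r)) \<longlongrightarrow> 0) (at_right 0)"
    by (rule filterlim_compose[rotated])
  from tendsto_divide[OF this tendsto_const[of r]] r
  show "((\<lambda>u. u powr r * ln u) \<longlongrightarrow> 0) (at_right 0)"
    by simp
qed

lemma has_integral_neg_ln_mult_powr:
  fixes b :: real
  assumes b: "b > -1"
  shows "((\<lambda>u. - ln u * u powr b) has_integral 1 / (b + 1)\<^sup>2) {0..1}"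
proof -
  define F where "F = (\<lambda>u::real. u powr (b + 1) * (1 / (b + 1)\<^sup>2 - ln u / (b + 1)))"
  have b1: "0 < b + 1"
    using b by simp
  have F0: "F 0 = 0" and F1: "F 1 = 1 / (b + 1)\<^sup>2"
    unfolding F_def by simp_all
  have F_eq: "F = (\<lambda>u. u powr (b + 1) * (1 / (b + 1)\<^sup>2) - u powr (b + 1) * ln u / (b + 1))"
    unfolding F_def by (rule ext) (simp only: right_diff_distrib times_divide_eq_right)
  have "((\<lambda>u. - ln u * u powr b) has_integral F 1 - F 0) {0..1}"
  proof (rule fundamental_theorem_of_calculus_interior)
    note lim = tendsto_powr_at_right_0[OF b1]
    have "((\<lambda>u. u powr (b + 1) * (1 / (b + 1)\<^sup>2) - u powr (b + 1) * ln u / (b + 1))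
        \<longlongrightarrow> 0 * (1 / (b + 1)\<^sup>2) - 0 / (b + 1)) (at_right 0)"
      using b1 by (intro tendsto_diff lim tendsto_mult tendsto_divide tendsto_const) auto
    then have "(F \<longlongrightarrow> F 0) (at_right 0)"
      unfolding F0 unfolding F_eq by (simp only: mult_zero_left div_0 diff_zero)
    moreover have "at (0::real) within {0..1} = at_right 0"
      by (rule at_within_Icc_at_right) simp
    ultimately have at0: "continuous (at 0 within {0..1}) F"
      by (simp only: continuous_within)
    have pos: "continuous (at x within {0..1}) F" if "0 < x" for x
    proof -
      have "continuous (at x) F"
        unfolding F_def using that b1 by (intro continuous_intros) simp_all
      then show ?thesis
        by (rule continuous_at_imp_continuous_within)
    qed
    show "continuous_on {0..1} F"
      unfolding continuous_on_eq_continuous_within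
    proof
      fix x :: real
      assume "x \<in> {0..1}"
      then consider "x = 0" | "0 < x"
        by fastforce
      then show "continuous (at x within {0..1}) F"
        using at0 pos by cases auto
    qed
  next
    fix u :: real
    assume u: "u \<in> {0<..<1}"
    define P where "P = u powr b"
    have powr: "u powr (b + 1 - 1) = P" "u powr (b + 1) = P * u"
      using u by (simp_all add: P_def powr_add)
    have "(F has_real_derivative (b + 1) * u powr (b + 1 - 1) * (1 / (b + 1)\<^sup>2 - ln u / (b + 1))
        + u powr (b + 1) * (0 - 1 / u / (b + 1))) (at u)"
      unfolding F_def using u b1 by (auto intro!: derivative_eq_intros)
    also have "(b + 1) * u powr (b + 1 - 1) * (1 / (b + 1)\<^sup>2 - ln u / (b + 1))
        + u powr (b + 1) * (0 - 1 / u / (b + 1)) = - ln u * u powr b"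
    proof -
      define c where "c = b + 1"
      have "c \<noteq> 0"
        using b1 by (simp add: c_def)
      then have "c * P * (1 / c\<^sup>2 - ln u / c) + P * u * (0 - 1 / u / c) = - ln u * P"
        using u by (simp add: field_split_simps power2_eq_square)
      then show ?thesis
        unfolding powr P_def[symmetric] c_def .
    qed
    finally show "(F has_vector_derivative - ln u * u powr b) (at u)"
      by (simp add: has_real_derivative_iff_has_vector_derivative)
  qed simp
  then show ?thesis
    by (simp only: F0 F1 diff_zero)
qed

lemma nn_integral_uniform01_powr:
  assumes "b > -1"
  shows "(\<integral>\<^sup>+u. ennreal (u powr b) \<partial>uniform01) = ennreal (1 / (b + 1))"
proof (rule nn_integral_uniform01_has_integral)
  show "(\<lambda>u. u powr b) \<in> borel_measurable borel"
    by measurable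
  show "0 \<le> u powr b" for u :: real
    by simp
  show "((\<lambda>u. u powr b) has_integral 1 / (b + 1)) {0..1}"
    using has_integral_powr_from_0[OF assms, of 1] by simp
qed

lemma nn_integral_uniform01_neg_ln_mult_powr:
  assumes "b > -1"
  shows "(\<integral>\<^sup>+u. ennreal (- ln u * u powr b) \<partial>uniform01) = ennreal (1 / (b + 1)\<^sup>2)"
proof (rule nn_integral_uniform01_has_integral[OF _ _ has_integral_neg_ln_mult_powr[OF assms]])
  show "(\<lambda>u. - ln u * u powr b) \<in> borel_measurable borel"
    by measurable
  fix u :: real
  assume u: "u \<in> {0..1}"
  have "ln u \<le> 0"
  proof (cases "u = 0")
    case False
    with u show ?thesis
      by simp
  qed simp
  then have "ln u * u powr b \<le> 0"
    by (rule mult_nonpos_nonneg) simp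
  then show "0 \<le> - ln u * u powr b"
    by simp
qed

lemma has_bochner_integral_uniform01_neg_ln: "has_bochner_integral uniform01 (\<lambda>u. - ln u) 1"
proof (rule has_bochner_integral_nn_integral)
  show "(\<lambda>u. - ln u) \<in> borel_measurable uniform01"
    by measurable
  show "AE u in uniform01. 0 \<le> - ln u"
    using AE_uniform01_between by eventually_elim simp
  have "(\<integral>\<^sup>+u. ennreal (- ln u) \<partial>uniform01) = (\<integral>\<^sup>+u. ennreal (- ln u * u powr 0) \<partial>uniform01)"
    using AE_uniform01_between by (intro nn_integral_cong_AE) (auto elim!: eventually_mono)
  then show "(\<integral>\<^sup>+u. ennreal (- ln u) \<partial>uniform01) = ennreal 1"
    using nn_integral_uniform01_neg_ln_mult_powr[of 0] by simp
qed simp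

section \<open>Products of independent uniform coordinates\<close>

lemma prod_of_bool_eq:
  "finite J \<Longrightarrow> (\<Prod>j\<in>J. of_bool (P j) :: 'a::comm_semiring_1) = of_bool (\<forall>j\<in>J. P j)"
  by (induction J rule: finite_induct) auto

lemma has_bochner_integral_PiM_component:
  fixes f :: "'a \<Rightarrow> 'b::{banach, second_countable_topology}"
  assumes M: "\<And>i. i \<in> I \<Longrightarrow> prob_space (M i)" and i: "i \<in> I"
    and f: "has_bochner_integral (M i) f r"
  shows "has_bochner_integral (PiM I M) (\<lambda>x. f (x i)) r"
proof -
  have comp: "(\<lambda>x. x i) \<in> measurable (PiM I M) (M i)"
    using i by (rule measurable_component_singleton)
  have [measurable]: "f \<in> borel_measurable (M i)"
    using f by (auto simp: has_bochner_integral_iff dest: borel_measurable_integrable)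
  have distr: "distr (PiM I M) (M i) (\<lambda>x. x i) = M i"
    by (rule distr_PiM_component[OF M i])
  show ?thesis
    using f integrable_distr_eq[OF comp, of f] integral_distr[OF comp, of f]
    unfolding distr by (simp add: has_bochner_integral_iff)
qed

lemma indep_vars_PiM_components:
  assumes M: "\<And>i. prob_space (M i)" and I: "finite I"
  shows "prob_space.indep_vars (PiM I M) M (\<lambda>i x. x i) I"
proof -
  have P: "product_prob_space M"
    using M by (rule product_prob_spaceI)
  interpret K: prob_space "PiM I M"
    using M by (intro prob_space_PiM)
  show ?thesis
  proof (cases "I = {}")
    case True
    then show ?thesis
      unfolding K.indep_vars_def K.indep_sets_def by simp
  next
    case False
    have "distr (PiM I M) (PiM I M) (\<lambda>x. \<lambda>i\<in>I. x i) = PiM I M"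
      using product_prob_space.distr_restrict[OF P, of I I] I by (simp add: restrict_def)
    also have "\<dots> = PiM I (\<lambda>i. distr (PiM I M) (M i) (\<lambda>x. x i))"
      by (intro PiM_cong refl product_prob_space.PiM_component[OF P, symmetric])
    finally show ?thesis
      by (subst K.indep_vars_iff_distr_eq_PiM'[OF False])
        (auto intro: measurable_component_singleton)
  qed
qed

lemma has_bochner_integral_PiM_rows:
  fixes M :: "'c measure" and \<phi> :: "'a \<Rightarrow> ('b \<Rightarrow> 'c) \<Rightarrow> real"
  assumes M: "prob_space M" and fin: "finite A" "finite B"
    and \<phi>: "\<And>a. a \<in> A \<Longrightarrow> has_bochner_integral (PiM B (\<lambda>_. M)) (\<phi> a) (r a)"
  shows "has_bochner_integral (PiM (A \<times> B) (\<lambda>_. M))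
           (\<lambda>\<xi>. \<Prod>a\<in>A. \<phi> a (\<lambda>b\<in>B. \<xi> (a, b))) (\<Prod>a\<in>A. r a)"
proof -
  let ?K = "PiM (A \<times> B) (\<lambda>_. M)" and ?Q = "PiM B (\<lambda>_. M)"
  have P: "product_prob_space (\<lambda>_. M)"
    using M by (rule product_prob_spaceI)
  interpret K: prob_space ?K
    using M by (rule prob_space_PiM)
  define row where "row a \<xi> = (\<lambda>b\<in>B. \<xi> (a, b))" for a and \<xi> :: "'a \<times> 'b \<Rightarrow> 'c"
  have row: "row a \<in> measurable (PiM S (\<lambda>_. M)) ?Q" if "{a} \<times> B \<subseteq> S" for a S
    unfolding row_def using that by (intro measurable_restrict measurable_component_singleton) auto
  have row_distr: "distr ?K ?Q (row a) = ?Q" if "a \<in> A" for a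
    unfolding row_def using product_prob_space.distr_reorder[OF P, of "\<lambda>b. (a, b)" B "A \<times> B"] that fin
    by (simp add: inj_on_def Pi_iff)
  have \<phi>_meas: "\<phi> a \<in> borel_measurable ?Q" if "a \<in> A" for a
    using \<phi>[OF that] by (auto simp: has_bochner_integral_iff dest: borel_measurable_integrable)
  have \<phi>_row: "integrable ?K (\<lambda>\<xi>. \<phi> a (row a \<xi>))" "(\<integral>\<xi>. \<phi> a (row a \<xi>) \<partial>?K) = r a"
    if "a \<in> A" for a
  proof -
    have "row a \<in> measurable ?K ?Q"
      using that by (intro row) auto
    then show "integrable ?K (\<lambda>\<xi>. \<phi> a (row a \<xi>))" "(\<integral>\<xi>. \<phi> a (row a \<xi>) \<partial>?K) = r a"
      using \<phi>[OF that] integrable_distr_eq[of "row a" ?K ?Q "\<phi> a"] integral_distr[of "row a" ?K ?Q "\<phi> a"]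
        \<phi>_meas[OF that] row_distr[OF that]
      by (simp_all add: has_bochner_integral_iff)
  qed
  have indep: "K.indep_vars (\<lambda>_. borel) (\<lambda>a \<xi>. \<phi> a (row a \<xi>)) A"
  proof -
    have "K.indep_vars (\<lambda>a. PiM ({a} \<times> B) (\<lambda>_. M)) (\<lambda>a \<xi>. restrict (\<lambda>i. \<xi> i) ({a} \<times> B)) A"
      by (rule K.indep_vars_restrict[OF indep_vars_PiM_components])
        (auto simp: M fin disjoint_family_on_def)
    then have "K.indep_vars (\<lambda>_. borel)
        (\<lambda>a \<xi>. (\<lambda>f. \<phi> a (row a f)) (restrict (\<lambda>i. \<xi> i) ({a} \<times> B))) A"
    proof (rule K.indep_vars_compose2)
      fix a
      assume "a \<in> A"
      show "(\<lambda>f. \<phi> a (row a f)) \<in> borel_measurable (PiM ({a} \<times> B) (\<lambda>_. M))"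
        using row[of a "{a} \<times> B"] \<phi>_meas[OF \<open>a \<in> A\<close>] by (rule measurable_compose) simp
    qed
    moreover have "row a (restrict (\<lambda>i. \<xi> i) ({a} \<times> B)) = row a \<xi>" for a \<xi>
      by (auto simp: row_def restrict_def fun_eq_iff)
    ultimately show ?thesis
      by simp
  qed
  have "integrable ?K (\<lambda>\<xi>. \<Prod>a\<in>A. \<phi> a (row a \<xi>))"
    by (rule K.indep_vars_integrable[OF fin(1) indep]) (simp add: \<phi>_row)
  moreover have "(\<integral>\<xi>. (\<Prod>a\<in>A. \<phi> a (row a \<xi>)) \<partial>?K) = (\<Prod>a\<in>A. \<integral>\<xi>. \<phi> a (row a \<xi>) \<partial>?K)"
    by (rule K.indep_vars_lebesgue_integral[OF fin(1) indep]) (simp add: \<phi>_row)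
  ultimately show ?thesis
    using \<phi>_row(2) by (simp add: has_bochner_integral_iff row_def)
qed

lemma (in pair_sigma_finite) has_bochner_integral_fst_mult_snd:
  fixes f :: "'a \<Rightarrow> real" and g :: "'b \<Rightarrow> real"
  assumes f: "has_bochner_integral M1 f a" and g: "has_bochner_integral M2 g b"
  shows "has_bochner_integral (M1 \<Otimes>\<^sub>M M2) (\<lambda>\<omega>. f (fst \<omega>) * g (snd \<omega>)) (a * b)"
proof -
  have [measurable]: "f \<in> borel_measurable M1" "g \<in> borel_measurable M2"
    using f g by (auto simp: has_bochner_integral_iff)
  have "(\<integral>\<^sup>+\<omega>. ennreal (norm (f (fst \<omega>) * g (snd \<omega>))) \<partial>(M1 \<Otimes>\<^sub>M M2))
      = (\<integral>\<^sup>+x. \<integral>\<^sup>+y. ennreal (norm (f (fst (x, y)) * g (snd (x, y)))) \<partial>M2 \<partial>M1)"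
    by (rule M2.nn_integral_fst[symmetric]) measurable
  also have "\<dots> = (\<integral>\<^sup>+x. ennreal (norm (f x)) * (\<integral>\<^sup>+y. ennreal (norm (g y)) \<partial>M2) \<partial>M1)"
    by (intro nn_integral_cong) (simp add: abs_mult ennreal_mult nn_integral_cmult)
  also have "\<dots> = (\<integral>\<^sup>+x. ennreal (norm (f x)) \<partial>M1) * (\<integral>\<^sup>+y. ennreal (norm (g y)) \<partial>M2)"
    by (rule nn_integral_multc) measurable
  also have "\<dots> < \<infinity>"
    using f g by (simp add: has_bochner_integral_iff integrable_iff_bounded ennreal_mult_less_top)
  finally have int: "integrable (M1 \<Otimes>\<^sub>M M2) (\<lambda>\<omega>. f (fst \<omega>) * g (snd \<omega>))"
    by (intro integrableI_bounded) measurable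
  have "(\<integral>\<omega>. f (fst \<omega>) * g (snd \<omega>) \<partial>(M1 \<Otimes>\<^sub>M M2)) = (\<integral>x. \<integral>y. f x * g y \<partial>M2 \<partial>M1)"
    using integral_fst'[OF int] by simp
  also have "\<dots> = a * b"
    using f g by (simp add: has_bochner_integral_iff)
  finally show ?thesis
    using int by (simp add: has_bochner_integral_iff)
qed

section \<open>The exponential-minimum decoder on a uniform key\<close>

definition expmin_argmins :: "nat \<Rightarrow> (nat \<Rightarrow> real) \<Rightarrow> (nat \<Rightarrow> real) \<Rightarrow> nat set" where
  "expmin_argmins N xi mu = {k \<in> {1..N}. \<forall>j\<in>{1..N}. expmin_cost xi mu k \<le> expmin_cost xi mu j}"

lemma Gamma_eq_SOME_argmins: "Gamma N xi mu = (SOME k. k \<in> expmin_argmins N xi mu)"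
  by (simp add: Gamma_def arg_min_on_def arg_min_def is_arg_min_linorder expmin_argmins_def Ball_def)

lemma Gamma_mem: "1 \<le> N \<Longrightarrow> Gamma N xi mu \<in> {1..N}"
  unfolding Gamma_def by (rule arg_min_if_finite(1)) auto

lemma expmin_cost_Gamma_le:
  "j \<in> {1..N} \<Longrightarrow> expmin_cost xi mu (Gamma N xi mu) \<le> expmin_cost xi mu j"
  unfolding Gamma_def by (rule arg_min_least) auto

lemma Gamma_eqI:
  assumes c: "c \<in> {1..N}"
    and less: "\<And>j. j \<in> {1..N} \<Longrightarrow> j \<noteq> c \<Longrightarrow> expmin_cost xi mu c < expmin_cost xi mu j"
  shows "Gamma N xi mu = c"
proof (rule ccontr)
  assume "Gamma N xi mu \<noteq> c"
  moreover have "Gamma N xi mu \<in> {1..N}"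
    using c by (intro Gamma_mem) auto
  ultimately have "expmin_cost xi mu c < expmin_cost xi mu (Gamma N xi mu)"
    by (rule less[rotated])
  with expmin_cost_Gamma_le[OF c, of xi mu] show False
    by simp
qed

lemma Gamma_cong:
  assumes "\<And>k. k \<in> {1..N} \<Longrightarrow> xi k = xi' k"
  shows "Gamma N xi mu = Gamma N xi' mu"
proof -
  have "expmin_argmins N xi mu = expmin_argmins N xi' mu"
    using assms by (auto simp: expmin_argmins_def expmin_cost_def)
  then show ?thesis
    by (simp add: Gamma_eq_SOME_argmins)
qed

lemma Gamma_neq_if_weight_zero:
  assumes "(\<Sum>k\<in>{1..N}. mu k) = 1" and "mu c = 0"
  shows "Gamma N xi mu \<noteq> c"
proof
  assume Gamma: "Gamma N xi mu = c"
  have "\<exists>j\<in>{1..N}. mu j \<noteq> 0"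
  proof (rule ccontr)
    assume "\<not> ?thesis"
    then have "(\<Sum>k\<in>{1..N}. mu k) = 0"
      by simp
    with assms(1) show False
      by simp
  qed
  then obtain j where j: "j \<in> {1..N}" "mu j \<noteq> 0"
    by blast
  with expmin_cost_Gamma_le[of j N xi mu] show False
    using Gamma \<open>mu c = 0\<close> by (simp add: expmin_cost_def)
qed

lemma pred_Gamma_eq:
  assumes xi: "\<And>k. k \<in> {1..N} \<Longrightarrow> (\<lambda>\<omega>. xi \<omega> k) \<in> borel_measurable M"
  shows "Measurable.pred M (\<lambda>\<omega>. Gamma N (xi \<omega>) mu = c)"
proof -
  have cost: "(\<lambda>\<omega>. expmin_cost (xi \<omega>) mu k) \<in> borel_measurable M" if "k \<in> {1..N}" for k
  proof (cases "mu k = 0")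
    case True
    then show ?thesis
      by (simp add: expmin_cost_def)
  next
    case False
    have [measurable]: "(\<lambda>\<omega>. xi \<omega> k) \<in> borel_measurable M"
      using xi[OF that] .
    show ?thesis
      using False by (simp add: expmin_cost_def)
  qed
  have argmins: "Measurable.pred M (\<lambda>\<omega>. expmin_argmins N (xi \<omega>) mu = T)" if "T \<subseteq> {1..N}" for T
  proof -
    have "(\<lambda>\<omega>. expmin_argmins N (xi \<omega>) mu = T)
        = (\<lambda>\<omega>. \<forall>k\<in>{1..N}. k \<in> T \<longleftrightarrow> (\<forall>j\<in>{1..N}. expmin_cost (xi \<omega>) mu k \<le> expmin_cost (xi \<omega>) mu j))"
      using that by (auto simp: expmin_argmins_def fun_eq_iff)
    moreover have "Measurable.pred M (\<lambda>\<omega>. expmin_cost (xi \<omega>) mu k \<le> expmin_cost (xi \<omega>) mu j)"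
      if "k \<in> {1..N}" "j \<in> {1..N}" for k j
      using cost[OF that(1)] cost[OF that(2)] by measurable
    ultimately show ?thesis
      by (simp only:) (intro pred_intros_finite pred_intros_logic; auto)
  qed
  have "expmin_argmins N x mu \<subseteq> {1..N}" for x
    by (auto simp: expmin_argmins_def)
  then have "(\<lambda>\<omega>. Gamma N (xi \<omega>) mu = c)
      = (\<lambda>\<omega>. \<exists>T\<in>Pow {1..N}. (SOME k. k \<in> T) = c \<and> expmin_argmins N (xi \<omega>) mu = T)"
    by (auto simp: Gamma_eq_SOME_argmins fun_eq_iff)
  then show ?thesis
    using argmins by (simp only:) (intro pred_intros_finite pred_intros_logic; auto)
qed

lemma expmin_cost_less_iff_powr:
  assumes "0 < xi c" "0 < xi j" "xi j < 1" "0 < mu c" "0 \<le> mu j"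
  shows "expmin_cost xi mu c < expmin_cost xi mu j \<longleftrightarrow> xi j < xi c powr (mu j / mu c)"
proof (cases "mu j = 0")
  case True
  then show ?thesis
    using assms by (simp add: expmin_cost_def)
next
  case False
  then have "0 < mu j"
    using assms by simp
  have "xi j < xi c powr (mu j / mu c) \<longleftrightarrow> ln (xi j) < mu j / mu c * ln (xi c)"
    using ln_less_cancel_iff[of "xi j" "xi c powr (mu j / mu c)"] assms by simp
  also have "\<dots> \<longleftrightarrow> - ln (xi c) / mu c < - ln (xi j) / mu j"
    using assms \<open>0 < mu j\<close> by (simp add: field_simps)
  finally show ?thesis
    using False assms by (simp add: expmin_cost_def)
qed

lemma expmin_cost_le_iff_powr:
  assumes "0 < xi c" "0 < xi j" "xi j < 1" "0 < mu c" "0 \<le> mu j"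
  shows "expmin_cost xi mu c \<le> expmin_cost xi mu j \<longleftrightarrow> xi j \<le> xi c powr (mu j / mu c)"
proof (cases "mu j = 0")
  case True
  then show ?thesis
    using assms by (simp add: expmin_cost_def)
next
  case False
  then have "0 < mu j"
    using assms by simp
  have "xi j \<le> xi c powr (mu j / mu c) \<longleftrightarrow> ln (xi j) \<le> mu j / mu c * ln (xi c)"
    using ln_le_cancel_iff[of "xi j" "xi c powr (mu j / mu c)"] assms by simp
  also have "\<dots> \<longleftrightarrow> - ln (xi c) / mu c \<le> - ln (xi j) / mu j"
    using assms \<open>0 < mu j\<close> by (simp add: field_simps)
  finally show ?thesis
    using False assms by (simp add: expmin_cost_def)
qed

(* Fubini in the coordinate c: given x c = u, the other coordinates fall below their thresholds
   u powr a j independently, each with probability u powr a j. *)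
lemma nn_integral_PiM_uniform01_race:
  fixes W :: "'i set" and a :: "'i \<Rightarrow> real" and R :: "real \<Rightarrow> real \<Rightarrow> bool"
    and w :: "real \<Rightarrow> ennreal"
  assumes W: "finite W" "c \<notin> W" "\<And>j. j \<in> W \<Longrightarrow> 0 \<le> a j"
    and R: "Measurable.pred (borel \<Otimes>\<^sub>M borel) (\<lambda>z. R (fst z) (snd z))"
      "\<And>t. 0 \<le> t \<Longrightarrow> t \<le> 1 \<Longrightarrow> emeasure uniform01 {v. R v t} = t"
    and w[measurable]: "w \<in> borel_measurable borel"
  shows "(\<integral>\<^sup>+x. w (x c) * indicator {x. \<forall>j\<in>W. R (x j) (x c powr a j)} x
            \<partial>PiM (insert c W) (\<lambda>_. uniform01))
       = (\<integral>\<^sup>+u. w u * ennreal (u powr (\<Sum>j\<in>W. a j)) \<partial>uniform01)"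
proof -
  interpret P: product_prob_space "\<lambda>_::'i. uniform01" "insert c W"
    by (intro product_prob_spaceI prob_space_uniform01)
  let ?P = "PiM (insert c W) (\<lambda>_::'i. uniform01)"
  have R_slice: "{v. R v t} \<in> sets borel" for t
  proof -
    have "(\<lambda>v. (v, t)) \<in> measurable borel (borel \<Otimes>\<^sub>M borel)"
      by (rule measurable_Pair2') simp
    from predE[OF measurable_compose[OF this R(1)]] show ?thesis
      by simp
  qed
  have [measurable]: "Measurable.pred ?P (\<lambda>x. \<forall>j\<in>W. R (x j) (x c powr a j))"
  proof (rule pred_intros_finite(3)[OF W(1)])
    fix j
    assume [simp]: "j \<in> W"
    have "(\<lambda>x. (x j, x c powr a j)) \<in> measurable ?P (borel \<Otimes>\<^sub>M borel)"
      by measurable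
    from measurable_compose[OF this R(1)] show "Measurable.pred ?P (\<lambda>x. R (x j) (x c powr a j))"
      by simp
  qed
  have "(\<integral>\<^sup>+x. w (x c) * indicator {x. \<forall>j\<in>W. R (x j) (x c powr a j)} x \<partial>?P)
      = (\<integral>\<^sup>+y. (\<integral>\<^sup>+x. w ((x(c := y)) c) * indicator {x. \<forall>j\<in>W. R (x j) (x c powr a j)} (x(c := y))
          \<partial>PiM W (\<lambda>_. uniform01)) \<partial>uniform01)"
    by (rule P.product_nn_integral_insert_rev[OF W(1,2)]) (simp add: indicator_def)
  also have "\<dots> = (\<integral>\<^sup>+y. (\<integral>\<^sup>+x. w y * indicator (\<Pi>\<^sub>E j\<in>W. {v. R v (y powr a j)}) x
      \<partial>PiM W (\<lambda>_. uniform01)) \<partial>uniform01)"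
    using W(2) by (intro nn_integral_cong) (auto simp: indicator_def space_PiM PiE_iff)
  also have "\<dots> = (\<integral>\<^sup>+y. w y * (\<Prod>j\<in>W. emeasure uniform01 {v. R v (y powr a j)}) \<partial>uniform01)"
    using W(1) R_slice
    by (intro nn_integral_cong) (simp add: nn_integral_cmult_indicator sets_PiM_I_finite P.emeasure_PiM)
  also have "\<dots> = (\<integral>\<^sup>+y. w y * ennreal (y powr (\<Sum>j\<in>W. a j)) \<partial>uniform01)"
    using AE_uniform01_between
  proof (intro nn_integral_cong_AE, eventually_elim)
    case (elim y)
    have "(\<Prod>j\<in>W. emeasure uniform01 {v. R v (y powr a j)}) = (\<Prod>j\<in>W. ennreal (y powr a j))"
      using elim W(3) by (intro prod.cong refl R(2)) (auto intro: powr_le1)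
    also have "\<dots> = ennreal (y powr (\<Sum>j\<in>W. a j))"
      using elim W(1) by (simp add: prod_ennreal powr_sum)
    finally show ?case
      by simp
  qed
  finally show ?thesis .
qed

lemma nn_integral_Gamma_eq:
  fixes mu :: "nat \<Rightarrow> real" and w :: "real \<Rightarrow> ennreal"
  assumes mu: "\<And>k. k \<in> {1..N} \<Longrightarrow> 0 \<le> mu k" "(\<Sum>k\<in>{1..N}. mu k) = 1"
    and c: "c \<in> {1..N}" "0 < mu c" and w: "w \<in> borel_measurable borel"
  shows "(\<integral>\<^sup>+x. w (x c) * indicator {x. Gamma N x mu = c} x \<partial>PiM {1..N} (\<lambda>_. uniform01))
       = (\<integral>\<^sup>+u. w u * ennreal (u powr ((1 - mu c) / mu c)) \<partial>uniform01)"
    (is "?lhs = ?rhs")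
proof -
  let ?Q = "PiM {1..N} (\<lambda>_::nat. uniform01)" and ?W = "{1..N} - {c}"
  (* The event Gamma N x mu = c lies between the races with strict and with non-strict
     thresholds, which have the same integral. *)
  define race where "race R = (\<integral>\<^sup>+x. w (x c) *
    indicator {x. \<forall>j\<in>?W. R (x j) (x c powr (mu j / mu c))} x \<partial>?Q)" for R :: "real \<Rightarrow> real \<Rightarrow> bool"
  have race_eq: "race R = ?rhs"
    if "Measurable.pred (borel \<Otimes>\<^sub>M borel) (\<lambda>z. R (fst z) (snd z))"
      and "\<And>t. 0 \<le> t \<Longrightarrow> t \<le> 1 \<Longrightarrow> emeasure uniform01 {v. R v t} = t"
    for R :: "real \<Rightarrow> real \<Rightarrow> bool"
  proof -
    have W: "finite ?W" "c \<notin> ?W"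
      by auto
    have a: "0 \<le> mu j / mu c" if "j \<in> ?W" for j
      using mu(1) that c(2) by simp
    have "insert c ?W = {1..N}"
      using c by auto
    moreover have "(\<Sum>j\<in>?W. mu j / mu c) = (1 - mu c) / mu c"
      using mu(2) c(1) by (simp add: sum_divide_distrib[symmetric] sum_diff1)
    ultimately show ?thesis
      using nn_integral_PiM_uniform01_race[OF W a that w] by (simp add: race_def)
  qed
  have "AE x in ?Q. \<forall>k\<in>{1..N}. 0 < x k \<and> x k < 1"
  proof (rule AE_finite_allI)
    fix k
    assume "k \<in> {1..N}"
    then show "AE x in ?Q. 0 < x k \<and> x k < 1"
      by (rule AE_PiM_component[OF prob_space_uniform01 _ AE_uniform01_between])
  qed simp
  then have sandwich: "AE x in ?Q. ((\<forall>j\<in>?W. x j < x c powr (mu j / mu c)) \<longrightarrow> Gamma N x mu = c)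
      \<and> (Gamma N x mu = c \<longrightarrow> (\<forall>j\<in>?W. x j \<le> x c powr (mu j / mu c)))"
  proof eventually_elim
    case (elim x)
    have xc: "0 < x c"
      using elim c(1) by blast
    have xj: "0 < x j" "x j < 1" if "j \<in> {1..N}" for j
      using elim that by blast+
    have less: "expmin_cost x mu c < expmin_cost x mu j \<longleftrightarrow> x j < x c powr (mu j / mu c)"
      and le: "expmin_cost x mu c \<le> expmin_cost x mu j \<longleftrightarrow> x j \<le> x c powr (mu j / mu c)"
      if "j \<in> {1..N}" for j
      using xc xj[OF that] c(2) mu(1)[OF that]
      by (rule expmin_cost_less_iff_powr, rule expmin_cost_le_iff_powr)
    show ?case
    proof (intro conjI impI)
      assume strict: "\<forall>j\<in>?W. x j < x c powr (mu j / mu c)"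
      show "Gamma N x mu = c"
      proof (rule Gamma_eqI[OF c(1)])
        fix j
        assume "j \<in> {1..N}" "j \<noteq> c"
        with strict show "expmin_cost x mu c < expmin_cost x mu j"
          using less[of j] by blast
      qed
    next
      assume Gamma: "Gamma N x mu = c"
      show "\<forall>j\<in>?W. x j \<le> x c powr (mu j / mu c)"
      proof
        fix j
        assume j: "j \<in> ?W"
        then have "expmin_cost x mu c \<le> expmin_cost x mu j"
          using expmin_cost_Gamma_le[of j N x mu] Gamma by simp
        then show "x j \<le> x c powr (mu j / mu c)"
          using le j by simp
      qed
    qed
  qed
  have mono: "(\<integral>\<^sup>+x. w (x c) * indicator {x. P x} x \<partial>?Q) \<le> (\<integral>\<^sup>+x. w (x c) * indicator {x. P' x} x \<partial>?Q)"
    if "AE x in ?Q. P x \<longrightarrow> P' x" for P P'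
  proof (rule nn_integral_mono_AE)
    from that show "AE x in ?Q. w (x c) * indicator {x. P x} x \<le> w (x c) * indicator {x. P' x} x"
      by eventually_elim (auto split: split_indicator)
  qed
  have "AE x in ?Q. (\<forall>j\<in>?W. x j < x c powr (mu j / mu c)) \<longrightarrow> Gamma N x mu = c"
    using sandwich by eventually_elim blast
  then have lower: "race (<) \<le> ?lhs"
    unfolding race_def by (rule mono)
  have "AE x in ?Q. Gamma N x mu = c \<longrightarrow> (\<forall>j\<in>?W. x j \<le> x c powr (mu j / mu c))"
    using sandwich by eventually_elim blast
  then have upper: "?lhs \<le> race (\<le>)"
    unfolding race_def by (rule mono)
  have "race (<) = ?rhs"
    by (rule race_eq) (simp, erule (1) emeasure_uniform01_less)
  moreover have "race (\<le>) = ?rhs"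
    by (rule race_eq) (simp, erule (1) emeasure_uniform01_le)
  ultimately show ?thesis
    using lower upper by (intro antisym) simp_all
qed

lemma has_bochner_integral_Gamma_eq:
  fixes mu :: "nat \<Rightarrow> real"
  assumes mu: "\<And>k. k \<in> {1..N} \<Longrightarrow> 0 \<le> mu k" "(\<Sum>k\<in>{1..N}. mu k) = 1" and c: "c \<in> {1..N}"
  shows "has_bochner_integral (PiM {1..N} (\<lambda>_. uniform01))
           (\<lambda>x. indicator {x. Gamma N x mu = c} x) (mu c)"
    and "has_bochner_integral (PiM {1..N} (\<lambda>_. uniform01))
           (\<lambda>x. indicator {x. Gamma N x mu = c} x * - ln (x c)) (mu c ^ 2)"
proof -
  let ?Q = "PiM {1..N} (\<lambda>_::nat. uniform01)"
  have [measurable]: "Measurable.pred ?Q (\<lambda>x. Gamma N x mu = c)"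
    by (rule pred_Gamma_eq) simp
  have c_meas[measurable]: "(\<lambda>x. x c) \<in> borel_measurable ?Q"
    using c by simp
  have ind_meas: "(\<lambda>x. indicator {x. Gamma N x mu = c} x :: real) \<in> borel_measurable ?Q"
    "(\<lambda>x. indicator {x. Gamma N x mu = c} x * - ln (x c)) \<in> borel_measurable ?Q"
    unfolding indicator_def by measurable
  have "has_bochner_integral ?Q (\<lambda>x. indicator {x. Gamma N x mu = c} x) (mu c)
      \<and> has_bochner_integral ?Q (\<lambda>x. indicator {x. Gamma N x mu = c} x * - ln (x c)) (mu c ^ 2)"
  proof (cases "mu c = 0")
    case True
    then have "{x. Gamma N x mu = c} = {}"
      using Gamma_neq_if_weight_zero[OF mu(2)] by auto
    then show ?thesis
      using True by (simp add: has_bochner_integral_zero)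
  next
    case False
    then have mc: "0 < mu c"
      using mu(1)[OF c] by simp
    define b where "b = (1 - mu c) / mu c"
    have "mu c \<le> 1"
      using member_le_sum[OF c, of mu] mu by simp
    then have b: "b > -1" "b + 1 = 1 / mu c"
      using mc by (auto simp: b_def field_simps)
    have "(\<integral>\<^sup>+x. ennreal (indicator {x. Gamma N x mu = c} x) \<partial>?Q)
        = (\<integral>\<^sup>+u. ennreal (u powr b) \<partial>uniform01)"
      using nn_integral_Gamma_eq[OF mu c mc, of "\<lambda>_. 1"] by (simp add: b_def ennreal_indicator)
    also have "\<dots> = ennreal (mu c)"
      using nn_integral_uniform01_powr[OF b(1)] b(2) by simp
    finally have prob: "has_bochner_integral ?Q (\<lambda>x. indicator {x. Gamma N x mu = c} x) (mu c)"
      using mc ind_meas(1) by (intro has_bochner_integral_nn_integral) auto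
    have "AE x in ?Q. 0 < x c \<and> x c < 1"
      by (rule AE_PiM_component[OF prob_space_uniform01 c AE_uniform01_between])
    then have nonneg: "AE x in ?Q. 0 \<le> indicator {x. Gamma N x mu = c} x * - ln (x c)"
      by eventually_elim (auto split: split_indicator)
    have "(\<integral>\<^sup>+x. ennreal (indicator {x. Gamma N x mu = c} x * - ln (x c)) \<partial>?Q)
        = (\<integral>\<^sup>+x. ennreal (- ln (x c)) * indicator {x. Gamma N x mu = c} x \<partial>?Q)"
      by (intro nn_integral_cong) (simp add: indicator_def)
    also have "\<dots> = (\<integral>\<^sup>+u. ennreal (- ln u) * ennreal (u powr b) \<partial>uniform01)"
      using nn_integral_Gamma_eq[OF mu c mc, of "\<lambda>u. ennreal (- ln u)"] by (simp add: b_def)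
    also have "\<dots> = (\<integral>\<^sup>+u. ennreal (- ln u * u powr b) \<partial>uniform01)"
      by (intro nn_integral_cong) (rule ennreal_mult''[symmetric], simp)
    also have "\<dots> = ennreal (mu c ^ 2)"
      using nn_integral_uniform01_neg_ln_mult_powr[OF b(1)] b(2) mc by (simp add: power_divide)
    finally have "has_bochner_integral ?Q (\<lambda>x. indicator {x. Gamma N x mu = c} x * - ln (x c)) (mu c ^ 2)"
      using nonneg mc ind_meas(2) by (intro has_bochner_integral_nn_integral) auto
    with prob show ?thesis ..
  qed
  then show "has_bochner_integral ?Q (\<lambda>x. indicator {x. Gamma N x mu = c} x) (mu c)"
    and "has_bochner_integral ?Q (\<lambda>x. indicator {x. Gamma N x mu = c} x * - ln (x c)) (mu c ^ 2)"
    by auto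
qed

section \<open>The generated sequence\<close>

lemma length_gen [simp]: "length (gen N p xi i) = i"
  by (induction i) auto

lemma take_gen: "j \<le> i \<Longrightarrow> take j (gen N p xi i) = gen N p xi j"
proof (induction i)
  case (Suc i)
  then show ?case
    by (cases "j = Suc i") auto
qed simp

lemma nth_gen: "j < i \<Longrightarrow> gen N p xi i ! j = Gamma N (xi j) (p (gen N p xi j))"
proof (induction i)
  case (Suc i)
  then show ?case
    by (cases "j = i") (auto simp: nth_append)
qed simp

lemma set_gen_subset: "1 \<le> N \<Longrightarrow> set (gen N p xi i) \<subseteq> {1..N}"
proof (induction i)
  case (Suc i)
  then show ?case
    using Gamma_mem[OF Suc.prems, of "xi i" "p (gen N p xi i)"] by auto
qed simp

lemma gen_eq_iff:
  assumes y: "length y = n"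
  shows "gen N p xi n = y \<longleftrightarrow> (\<forall>j<n. Gamma N (xi j) (p (take j y)) = y ! j)"
proof
  assume "gen N p xi n = y"
  then show "\<forall>j<n. Gamma N (xi j) (p (take j y)) = y ! j"
    using take_gen[of _ n N p xi] nth_gen[of _ n N p xi] by auto
next
  assume Gamma: "\<forall>j<n. Gamma N (xi j) (p (take j y)) = y ! j"
  have "gen N p xi i = take i y" if "i \<le> n" for i
    using that
  proof (induction i)
    case (Suc i)
    then show ?case
      using Gamma y by (simp add: take_Suc_conv_app_nth)
  qed simp
  from this[of n] show "gen N p xi n = y"
    using y by simp
qed

definition seq_prob :: "(nat list \<Rightarrow> nat \<Rightarrow> real) \<Rightarrow> nat list \<Rightarrow> real" where
  "seq_prob p y = (\<Prod>j<length y. p (take j y) (y ! j))"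

lemma measurable_generate:
  "(\<lambda>\<xi>. generate N (as_keys \<xi>) n p) \<in> measurable (keys_uniform n N) (count_space UNIV)"
  unfolding measurable_count_space_eq2_countable
proof (intro conjI ballI)
  fix y :: "nat list"
  let ?K = "keys_uniform n N"
  show "(\<lambda>\<xi>. generate N (as_keys \<xi>) n p) -` {y} \<inter> space ?K \<in> sets ?K"
  proof (cases "length y = n")
    case True
    have "Measurable.pred ?K (\<lambda>\<xi>. Gamma N (as_keys \<xi> j) (p (take j y)) = y ! j)" if "j < n" for j
    proof (rule pred_Gamma_eq)
      fix k
      assume "k \<in> {1..N}"
      with that show "(\<lambda>\<xi>. as_keys \<xi> j k) \<in> borel_measurable ?K"
        by (simp add: keys_uniform_def key_index_def as_keys_def)
    qed
    then have "Measurable.pred ?K (\<lambda>\<xi>. \<forall>j\<in>{..<n}. Gamma N (as_keys \<xi> j) (p (take j y)) = y ! j)"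
      by (intro pred_intros_finite) auto
    then have "{\<xi> \<in> space ?K. \<forall>j\<in>{..<n}. Gamma N (as_keys \<xi> j) (p (take j y)) = y ! j} \<in> sets ?K"
      by (rule predE)
    moreover have "(\<lambda>\<xi>. generate N (as_keys \<xi>) n p) -` {y} \<inter> space ?K
        = {\<xi> \<in> space ?K. \<forall>j\<in>{..<n}. Gamma N (as_keys \<xi> j) (p (take j y)) = y ! j}"
      using True by (auto simp: generate_def gen_eq_iff)
    ultimately show ?thesis
      by simp
  next
    case False
    then have "(\<lambda>\<xi>. generate N (as_keys \<xi>) n p) -` {y} \<inter> space ?K = {}"
      by (auto simp: generate_def)
    then show ?thesis
      by simp
  qed
qed simp

lemma prob_space_keys_uniform: "prob_space (keys_uniform n N)"
  unfolding keys_uniform_def by (intro prob_space_PiM prob_space_uniform01)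

lemma indicator_generate_eq:
  assumes "length y = n"
  shows "indicator {\<xi>. generate N (as_keys \<xi>) n p = y} \<xi>
       = (\<Prod>j<n. indicator {x. Gamma N x (p (take j y)) = y ! j} (\<lambda>k\<in>{1..N}. \<xi> (j, k)) :: real)"
proof -
  have "Gamma N (\<lambda>k\<in>{1..N}. \<xi> (j, k)) mu = Gamma N (as_keys \<xi> j) mu" for j mu
    by (rule Gamma_cong) (simp add: as_keys_def)
  then show ?thesis
    using assms by (auto simp: indicator_def prod_of_bool_eq generate_def gen_eq_iff)
qed

lemma has_bochner_integral_generate_eq:
  fixes p :: "nat list \<Rightarrow> nat \<Rightarrow> real"
  assumes p: "\<And>x k. 0 \<le> p x k" "\<And>x. (\<Sum>k\<in>{1..N}. p x k) = 1"
    and y: "length y = n" "set y \<subseteq> {1..N}"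
  shows "has_bochner_integral (keys_uniform n N)
           (\<lambda>\<xi>. indicator {\<xi>. generate N (as_keys \<xi>) n p = y} \<xi>) (seq_prob p y)"
    and "i < n \<Longrightarrow> has_bochner_integral (keys_uniform n N)
           (\<lambda>\<xi>. indicator {\<xi>. generate N (as_keys \<xi>) n p = y} \<xi> * - ln (\<xi> (i, y ! i)))
           (seq_prob p y * p (take i y) (y ! i))"
proof -
  let ?Q = "PiM {1..N} (\<lambda>_::nat. uniform01)"
  have keys: "PiM ({..<n} \<times> {1..N}) (\<lambda>_. uniform01) = keys_uniform n N"
    by (simp add: keys_uniform_def key_index_def atLeast0LessThan)
  have y_mem: "y ! j \<in> {1..N}" if "j < n" for j
    using y that by (auto simp: subset_iff)
  have step: "has_bochner_integral ?Q (\<lambda>x. indicator {x. Gamma N x (p (take j y)) = y ! j} x)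
        (p (take j y) (y ! j))"
      "has_bochner_integral ?Q (\<lambda>x. indicator {x. Gamma N x (p (take j y)) = y ! j} x * - ln (x (y ! j)))
        (p (take j y) (y ! j) ^ 2)"
    if "j < n" for j
    using has_bochner_integral_Gamma_eq[where mu="p (take j y)" and c="y ! j", OF p(1) p(2) y_mem[OF that]]
    by auto
  have rows: "has_bochner_integral (PiM ({..<n} \<times> {1..N}) (\<lambda>_. uniform01))
      (\<lambda>\<xi>. \<Prod>j<n. indicator {x. Gamma N x (p (take j y)) = y ! j} (\<lambda>k\<in>{1..N}. \<xi> (j, k)))
      (\<Prod>j<n. p (take j y) (y ! j))"
  proof (rule has_bochner_integral_PiM_rows[OF prob_space_uniform01])
    fix j
    assume "j \<in> {..<n}"
    then show "has_bochner_integral ?Q (\<lambda>x. indicator {x. Gamma N x (p (take j y)) = y ! j} x)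
        (p (take j y) (y ! j))"
      by (intro step(1)) simp
  qed simp_all
  have prob: "(\<Prod>j<n. p (take j y) (y ! j)) = seq_prob p y"
    by (simp add: seq_prob_def y(1))
  show "has_bochner_integral (keys_uniform n N)
      (\<lambda>\<xi>. indicator {\<xi>. generate N (as_keys \<xi>) n p = y} \<xi>) (seq_prob p y)"
    by (rule has_bochner_integral_cong[OF keys indicator_generate_eq[OF y(1), symmetric] prob,
          THEN iffD1, OF rows])
  assume i: "i < n"
  define \<phi> where "\<phi> j = (\<lambda>x :: nat \<Rightarrow> real. indicator {x. Gamma N x (p (take j y)) = y ! j} x
    * (if j = i then - ln (x (y ! i)) else 1))" for j
  have rows_ln: "has_bochner_integral (PiM ({..<n} \<times> {1..N}) (\<lambda>_. uniform01))
      (\<lambda>\<xi>. \<Prod>j<n. \<phi> j (\<lambda>k\<in>{1..N}. \<xi> (j, k)))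
      (\<Prod>j<n. p (take j y) (y ! j) * (if j = i then p (take i y) (y ! i) else 1))"
  proof (rule has_bochner_integral_PiM_rows[OF prob_space_uniform01])
    fix j
    assume "j \<in> {..<n}"
    then show "has_bochner_integral ?Q (\<phi> j) (p (take j y) (y ! j) * (if j = i then p (take i y) (y ! i) else 1))"
      using step[of j] by (cases "j = i") (simp_all add: \<phi>_def power2_eq_square)
  qed simp_all
  have integrand: "(\<Prod>j<n. \<phi> j (\<lambda>k\<in>{1..N}. \<xi> (j, k)))
      = indicator {\<xi>. generate N (as_keys \<xi>) n p = y} \<xi> * - ln (\<xi> (i, y ! i))" for \<xi>
  proof -
    have "(\<Prod>j<n. \<phi> j (\<lambda>k\<in>{1..N}. \<xi> (j, k)))
        = (\<Prod>j<n. indicator {x. Gamma N x (p (take j y)) = y ! j} (\<lambda>k\<in>{1..N}. \<xi> (j, k)))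
          * (\<Prod>j<n. if j = i then - ln (\<xi> (i, y ! i)) else 1)"
      unfolding \<phi>_def prod.distrib using y_mem[OF i] by (intro arg_cong2[where f=times] prod.cong) auto
    also have "\<dots> = indicator {\<xi>. generate N (as_keys \<xi>) n p = y} \<xi> * - ln (\<xi> (i, y ! i))"
      using i by (simp only: indicator_generate_eq[OF y(1)] prod.delta finite_lessThan lessThan_iff if_True)
    finally show ?thesis .
  qed
  have "(\<Prod>j<n. p (take j y) (y ! j) * (if j = i then p (take i y) (y ! i) else 1))
      = seq_prob p y * p (take i y) (y ! i)"
    using i y(1) by (simp add: prod.distrib seq_prob_def)
  from has_bochner_integral_cong[OF keys integrand this, THEN iffD1, OF rows_ln]
  show "has_bochner_integral (keys_uniform n N)
      (\<lambda>\<xi>. indicator {\<xi>. generate N (as_keys \<xi>) n p = y} \<xi> * - ln (\<xi> (i, y ! i)))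
      (seq_prob p y * p (take i y) (y ! i))" .
qed

lemma has_bochner_integral_keys_uniform_neg_ln:
  assumes "i < n" "k \<in> {1..N}"
  shows "has_bochner_integral (keys_uniform n N) (\<lambda>\<xi>. - ln (\<xi> (i, k))) 1"
  unfolding keys_uniform_def
  by (rule has_bochner_integral_PiM_component[where f="\<lambda>u. - ln u"])
    (use assms in \<open>auto simp: key_index_def prob_space_uniform01 has_bochner_integral_uniform01_neg_ln\<close>)

section \<open>Conditioning on the generated sequence\<close>

lemma has_bochner_integral_two_keys_level:
  fixes p :: "nat list \<Rightarrow> nat \<Rightarrow> real"
  assumes p: "\<And>x k. 0 \<le> p x k" "\<And>x. (\<Sum>k\<in>{1..N}. p x k) = 1"
    and y: "length y = n" "set y \<subseteq> {1..N}"
  defines "Y \<equiv> \<lambda>\<omega>. generate N (as_keys (fst \<omega>)) n p"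
  shows "has_bochner_integral (two_keys n N) (\<lambda>\<omega>. indicator {\<omega>. Y \<omega> = y} \<omega>) (seq_prob p y)"
    and "i < n \<Longrightarrow> has_bochner_integral (two_keys n N)
           (\<lambda>\<omega>. indicator {\<omega>. Y \<omega> = y} \<omega> *
              (dtok (Y \<omega> ! i) (as_keys (snd \<omega>) i) - dtok (Y \<omega> ! i) (as_keys (fst \<omega>) i)))
           (seq_prob p y * (1 - p (take i y) (y ! i)))"
proof -
  let ?K = "keys_uniform n N"
  interpret K: prob_space ?K
    by (rule prob_space_keys_uniform)
  interpret KK: pair_sigma_finite ?K ?K
    by (intro pair_sigma_finite.intro K.sigma_finite_measure_axioms)
  have one: "has_bochner_integral ?K (\<lambda>_. 1) (1::real)"
    by (simp add: has_bochner_integral_iff K.prob_space)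
  note level = has_bochner_integral_generate_eq[OF p y]
  have two_keys: "?K \<Otimes>\<^sub>M ?K = two_keys n N"
    by (simp add: two_keys_def)
  show "has_bochner_integral (two_keys n N) (\<lambda>\<omega>. indicator {\<omega>. Y \<omega> = y} \<omega>) (seq_prob p y)"
    using KK.has_bochner_integral_fst_mult_snd[OF level(1) one]
    by (rule has_bochner_integral_cong[THEN iffD1, rotated 3])
      (simp_all add: two_keys Y_def indicator_def)
  assume i: "i < n"
  have "y ! i \<in> {1..N}"
    using y i by (auto simp: subset_iff)
  then have neg_ln: "has_bochner_integral ?K (\<lambda>\<xi>. - ln (\<xi> (i, y ! i))) 1"
    using i by (rule has_bochner_integral_keys_uniform_neg_ln[rotated])
  from has_bochner_integral_diff[OF KK.has_bochner_integral_fst_mult_snd[OF level(1) neg_ln]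
      KK.has_bochner_integral_fst_mult_snd[OF level(2)[OF i] one]]
  show "has_bochner_integral (two_keys n N)
      (\<lambda>\<omega>. indicator {\<omega>. Y \<omega> = y} \<omega> *
        (dtok (Y \<omega> ! i) (as_keys (snd \<omega>) i) - dtok (Y \<omega> ! i) (as_keys (fst \<omega>) i)))
      (seq_prob p y * (1 - p (take i y) (y ! i)))"
    by (rule has_bochner_integral_cong[THEN iffD1, rotated 3])
      (auto simp: two_keys Y_def dtok_def as_keys_def algebra_simps split: split_indicator)
qed

lemma (in finite_measure) real_cond_exp_vimage_finite_range:
  fixes Y :: "'a \<Rightarrow> 'b" and f :: "'a \<Rightarrow> real" and g q :: "'b \<Rightarrow> real"
  assumes Y: "Y \<in> measurable M (count_space UNIV)"
    and L: "finite L" "\<And>\<omega>. \<omega> \<in> space M \<Longrightarrow> Y \<omega> \<in> L"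
    and level_prob: "\<And>y. y \<in> L \<Longrightarrow> has_bochner_integral M (\<lambda>\<omega>. indicator {\<omega>. Y \<omega> = y} \<omega>) (q y)"
    and level: "\<And>y. y \<in> L \<Longrightarrow>
      has_bochner_integral M (\<lambda>\<omega>. indicator {\<omega>. Y \<omega> = y} \<omega> * f \<omega>) (q y * g y)"
  shows "AE \<omega> in M. real_cond_exp M (vimage_algebra (space M) Y (count_space UNIV)) f \<omega> = g (Y \<omega>)"
proof -
  define F where "F = vimage_algebra (space M) Y (count_space UNIV)"
  have "subalgebra M F"
    unfolding subalgebra_def F_def using sets_image_in_sets[OF refl Y] by simp
  then interpret S: finite_measure_subalgebra M F
    by (intro finite_measure_subalgebra.intro finite_measure_axioms)
      (simp add: finite_measure_subalgebra_axioms_def)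
  have level_g: "has_bochner_integral M (\<lambda>\<omega>. indicator {\<omega>. Y \<omega> = y} \<omega> * g (Y \<omega>)) (q y * g y)"
    if "y \<in> L" for y
    using has_bochner_integral_mult_left[OF level_prob[OF that], of "g y"]
    by (rule has_bochner_integral_cong[THEN iffD1, rotated 3]) (auto split: split_indicator)
  have split_levels: "indicator (Y -` B \<inter> space M) \<omega> * h \<omega>
      = (\<Sum>y\<in>L \<inter> B. indicator {\<omega>. Y \<omega> = y} \<omega> * h \<omega>)" if "\<omega> \<in> space M" for \<omega> and h :: "'a \<Rightarrow> real" and B
  proof -
    have "(\<Sum>y\<in>L \<inter> B. indicator {\<omega>. Y \<omega> = y} \<omega> * h \<omega>) = (\<Sum>y\<in>L \<inter> B. if Y \<omega> = y then h \<omega> else 0)"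
      by (intro sum.cong) (auto simp: indicator_def)
    also have "\<dots> = indicator (Y -` B \<inter> space M) \<omega> * h \<omega>"
      using L that by (simp add: sum.delta' indicator_def)
    finally show ?thesis ..
  qed
  have set_integral: "(\<integral>\<omega>\<in>Y -` B \<inter> space M. h \<omega> \<partial>M) = (\<Sum>y\<in>L \<inter> B. r y)"
    and integrable_levels: "integrable M h"
    if levels: "\<And>y. y \<in> L \<Longrightarrow> has_bochner_integral M (\<lambda>\<omega>. indicator {\<omega>. Y \<omega> = y} \<omega> * h \<omega>) (r y)"
    for h :: "'a \<Rightarrow> real" and r B
  proof -
    have int: "integrable M (\<lambda>\<omega>. indicator {\<omega>. Y \<omega> = y} \<omega> * h \<omega>)" if "y \<in> L" for y
      using levels[OF that] by (simp add: has_bochner_integral_iff)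
    have "(\<integral>\<omega>\<in>Y -` B \<inter> space M. h \<omega> \<partial>M) = (\<integral>\<omega>. (\<Sum>y\<in>L \<inter> B. indicator {\<omega>. Y \<omega> = y} \<omega> * h \<omega>) \<partial>M)"
      unfolding set_lebesgue_integral_def
      by (intro Bochner_Integration.integral_cong) (simp_all add: real_scaleR_def split_levels)
    also have "\<dots> = (\<Sum>y\<in>L \<inter> B. r y)"
      using levels int by (subst Bochner_Integration.integral_sum) (auto simp: has_bochner_integral_iff)
    finally show "(\<integral>\<omega>\<in>Y -` B \<inter> space M. h \<omega> \<partial>M) = (\<Sum>y\<in>L \<inter> B. r y)" .
    have "integrable M (\<lambda>\<omega>. \<Sum>y\<in>L \<inter> UNIV. indicator {\<omega>. Y \<omega> = y} \<omega> * h \<omega>)"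
      using int by auto
    then show "integrable M h"
    proof (rule Bochner_Integration.integrable_cong[OF refl, THEN iffD1, rotated])
      fix \<omega>
      assume "\<omega> \<in> space M"
      from split_levels[OF this, where h=h and B=UNIV] this
      show "(\<Sum>y\<in>L \<inter> UNIV. indicator {\<omega>. Y \<omega> = y} \<omega> * h \<omega>) = h \<omega>"
        by simp
    qed
  qed
  have "AE \<omega> in M. real_cond_exp M F f \<omega> = g (Y \<omega>)"
  proof (rule S.real_cond_exp_charact)
    fix A
    assume "A \<in> sets F"
    then obtain B where A: "A = Y -` B \<inter> space M"
      unfolding F_def by (subst (asm) sets_vimage_algebra2) auto
    show "(\<integral>\<omega>\<in>A. f \<omega> \<partial>M) = (\<integral>\<omega>\<in>A. g (Y \<omega>) \<partial>M)"
      unfolding A using set_integral[OF level] set_integral[OF level_g] by simp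
  next
    show "integrable M f" "integrable M (\<lambda>\<omega>. g (Y \<omega>))"
      using integrable_levels[OF level] integrable_levels[OF level_g] by auto
    show "(\<lambda>\<omega>. g (Y \<omega>)) \<in> borel_measurable F"
      unfolding F_def by (intro measurable_compose[OF measurable_vimage_algebra1]) auto
  qed
  then show ?thesis
    by (simp add: F_def)
qed

theorem lemma7:
  fixes n N :: nat and p :: "nat list \<Rightarrow> nat \<Rightarrow> real"
  assumes p_nonneg: "\<And>x k. p x k \<ge> 0"
    and p_sum: "\<And>x. (\<Sum>k\<in>{1..N}. p x k) = 1"
  defines "M \<equiv> two_keys n N"
    and "Y \<equiv> (\<lambda>\<omega>. generate N (as_keys (fst \<omega>)) n p)"
  shows "AE \<omega> in M. \<forall>i<n.
           real_cond_exp M (vimage_algebra (space M) Y (count_space UNIV))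
             (\<lambda>\<omega>'. dtok (Y \<omega>' ! i) (as_keys (snd \<omega>') i) - dtok (Y \<omega>' ! i) (as_keys (fst \<omega>') i)) \<omega>
           = 1 - p (take i (Y \<omega>)) (Y \<omega> ! i)"
proof -
  have N: "1 \<le> N"
    using p_sum[of "[]"] by (cases N) auto
  interpret prob_space M
    unfolding M_def two_keys_def by (intro prob_space_pair prob_space_keys_uniform)
  define L where "L = {y. set y \<subseteq> {1..N} \<and> length y = n}"
  have Y_meas: "Y \<in> measurable M (count_space UNIV)"
    unfolding Y_def M_def two_keys_def by (rule measurable_compose[OF measurable_fst measurable_generate])
  have L: "finite L" "\<And>\<omega>. Y \<omega> \<in> L"
    using set_gen_subset[OF N] by (auto simp: L_def Y_def generate_def intro: finite_lists_length_eq)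
  have level_prob: "has_bochner_integral M (\<lambda>\<omega>. indicator {\<omega>. Y \<omega> = y} \<omega>) (seq_prob p y)"
    if "y \<in> L" for y
    using has_bochner_integral_two_keys_level(1)[where p=p and N=N and n=n, OF p_nonneg p_sum] that
    by (simp add: M_def Y_def L_def)
  have level: "has_bochner_integral M
      (\<lambda>\<omega>. indicator {\<omega>. Y \<omega> = y} \<omega> *
        (dtok (Y \<omega> ! i) (as_keys (snd \<omega>) i) - dtok (Y \<omega> ! i) (as_keys (fst \<omega>) i)))
      (seq_prob p y * (1 - p (take i y) (y ! i)))" if "y \<in> L" "i < n" for y i
    using has_bochner_integral_two_keys_level(2)[where p=p and N=N and n=n, OF p_nonneg p_sum] that
    by (simp add: M_def Y_def L_def)
  have "AE \<omega> in M. real_cond_exp M (vimage_algebra (space M) Y (count_space UNIV))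
      (\<lambda>\<omega>'. dtok (Y \<omega>' ! i) (as_keys (snd \<omega>') i) - dtok (Y \<omega>' ! i) (as_keys (fst \<omega>') i)) \<omega>
      = 1 - p (take i (Y \<omega>)) (Y \<omega> ! i)" if "i < n" for i
    by (rule real_cond_exp_vimage_finite_range[OF Y_meas L(1) L(2) level_prob level[OF _ that]])
  then have "AE \<omega> in M. \<forall>i\<in>{..<n}. real_cond_exp M (vimage_algebra (space M) Y (count_space UNIV))
      (\<lambda>\<omega>'. dtok (Y \<omega>' ! i) (as_keys (snd \<omega>') i) - dtok (Y \<omega>' ! i) (as_keys (fst \<omega>') i)) \<omega>
      = 1 - p (take i (Y \<omega>)) (Y \<omega> ! i)"
    by (intro AE_finite_allI) auto
  then show ?thesis
    by (rule eventually_mono) auto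
qed

end
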